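(* Let $q$ be a self-join-free Boolean conjunctive query, let $q_0\subseteq q$, and let $\mathbf{db}$ be a database. If $\mathbf{o}_1$ and $\mathbf{o}_2$ are garbage sets for $q_0$ in $\mathbf{db}$, then $\mathbf{o}_1\cup\mathbf{o}_2$ is a garbage set for $q_0$ in $\mathbf{db}$.
   Context: Every relation name has a signature $[n,k]$ ($1\le k\le n$; primary-key positions $1,\dots,k$) and a mode in $\{\mathsf{c},\mathsf{i}\}$. Facts are variable-free atoms; facts are key-equal if same relation name and same primary-key values. A database is a finite set of facts with no two distinct key-equal facts of mode $\mathsf{c}$, all of whose relation names occur in $q$. The block of a fact $A$ in $\mathbf{db}$ is the set of facts of $\mathbf{db}$ key-equal to $A$. A repair of a set of facts is a maximal subset without two distinct key-equal facts. A self-join-free Boolean conjunctive query is a finite set of atoms with distinct relation names; for a fact $A$, $\mathrm{atom}(A)$ is the atom of $q$ with the same relation name; valuations are extended as the identity on constants. A subset $\mathbf{o}\subseteq\mathbf{db}$ is a garbage set for $q_0$ in $\mathbf{db}$ if (1) for every $A\in\mathbf{o}$, $\mathrm{atom}(A)\in q_0$ and the block of $A$ in $\mathbf{db}$ is included in $\mathbf{o}$; and (2) there is a repair $\mathbf{r}$ of $\mathbf{o}$ such that for every valuation $\theta$ of the variables of $q$, if $\theta(q)\subseteq(\mathbf{db}\setminus\mathbf{o})\cup\mathbf{r}$ then $\theta(q_0)\cap\mathbf{r}=\emptyset$. *)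

theory Defs
  imports Main
begin

text \<open>Modes of relation names: c (consistent) and i (inconsistent).\<close>
datatype mode = ModeC | ModeI

record 'r schema =
  arity  :: "'r \<Rightarrow> nat"
  keylen :: "'r \<Rightarrow> nat"
  rmode  :: "'r \<Rightarrow> mode"

definition wf_schema :: "'r schema \<Rightarrow> bool" where
  "wf_schema S \<longleftrightarrow> (\<forall>R. 1 \<le> keylen S R \<and> keylen S R \<le> arity S R)"

datatype ('v, 'c) trm = Var 'v | Cst 'c

type_synonym ('r, 'v, 'c) atom = "'r \<times> ('v, 'c) trm list"
type_synonym ('r, 'c) fact = "'r \<times> 'c list"

definition wf_atom :: "'r schema \<Rightarrow> ('r, 'v, 'c) atom \<Rightarrow> bool" where
  "wf_atom S a \<longleftrightarrow> length (snd a) = arity S (fst a)"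

definition wf_fact :: "'r schema \<Rightarrow> ('r, 'c) fact \<Rightarrow> bool" where
  "wf_fact S A \<longleftrightarrow> length (snd A) = arity S (fst A)"

definition key_equal :: "'r schema \<Rightarrow> ('r, 'c) fact \<Rightarrow> ('r, 'c) fact \<Rightarrow> bool" where
  "key_equal S A B \<longleftrightarrow> fst A = fst B \<and>
     take (keylen S (fst A)) (snd A) = take (keylen S (fst B)) (snd B)"

definition sjf_query :: "'r schema \<Rightarrow> ('r, 'v, 'c) atom set \<Rightarrow> bool" where
  "sjf_query S q \<longleftrightarrow> finite q \<and> (\<forall>a\<in>q. wf_atom S a) \<and>
     (\<forall>a\<in>q. \<forall>b\<in>q. fst a = fst b \<longrightarrow> a = b)"

definition is_database :: "'r schema \<Rightarrow> ('r, 'v, 'c) atom set \<Rightarrow> ('r, 'c) fact set \<Rightarrow> bool" where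
  "is_database S q db \<longleftrightarrow> finite db \<and> (\<forall>A\<in>db. wf_fact S A) \<and>
     (\<forall>A\<in>db. \<forall>B\<in>db. key_equal S A B \<and> A \<noteq> B \<longrightarrow> rmode S (fst A) \<noteq> ModeC) \<and>
     (\<forall>A\<in>db. \<exists>a\<in>q. fst a = fst A)"

definition block :: "'r schema \<Rightarrow> ('r, 'c) fact \<Rightarrow> ('r, 'c) fact set \<Rightarrow> ('r, 'c) fact set" where
  "block S A db = {B \<in> db. key_equal S B A}"

definition consistent :: "'r schema \<Rightarrow> ('r, 'c) fact set \<Rightarrow> bool" where
  "consistent S r \<longleftrightarrow> (\<forall>A\<in>r. \<forall>B\<in>r. key_equal S A B \<longrightarrow> A = B)"

definition is_repair :: "'r schema \<Rightarrow> ('r, 'c) fact set \<Rightarrow> ('r, 'c) fact set \<Rightarrow> bool" where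
  "is_repair S r s \<longleftrightarrow> r \<subseteq> s \<and> consistent S r \<and>
     (\<forall>r'. r \<subset> r' \<and> r' \<subseteq> s \<longrightarrow> \<not> consistent S r')"

fun val_trm :: "('v \<Rightarrow> 'c) \<Rightarrow> ('v, 'c) trm \<Rightarrow> 'c" where
  "val_trm \<theta> (Var x) = \<theta> x"
| "val_trm \<theta> (Cst c) = c"

definition val_atom :: "('v \<Rightarrow> 'c) \<Rightarrow> ('r, 'v, 'c) atom \<Rightarrow> ('r, 'c) fact" where
  "val_atom \<theta> a = (fst a, map (val_trm \<theta>) (snd a))"

definition val_query :: "('v \<Rightarrow> 'c) \<Rightarrow> ('r, 'v, 'c) atom set \<Rightarrow> ('r, 'c) fact set" where
  "val_query \<theta> q = val_atom \<theta> ` q"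

definition atom_of :: "('r, 'v, 'c) atom set \<Rightarrow> ('r, 'c) fact \<Rightarrow> ('r, 'v, 'c) atom" where
  "atom_of q A = (THE a. a \<in> q \<and> fst a = fst A)"

definition garbage_set ::
  "'r schema \<Rightarrow> ('r, 'v, 'c) atom set \<Rightarrow> ('r, 'v, 'c) atom set \<Rightarrow> ('r, 'c) fact set
     \<Rightarrow> ('r, 'c) fact set \<Rightarrow> bool" where
  "garbage_set S q q0 db ob \<longleftrightarrow> ob \<subseteq> db \<and>
     (\<forall>A\<in>ob. atom_of q A \<in> q0 \<and> block S A db \<subseteq> ob) \<and>
     (\<exists>r. is_repair S r ob \<and>
        (\<forall>\<theta>::'v \<Rightarrow> 'c. val_query \<theta> q \<subseteq> (db - ob) \<union> r \<longrightarrow> val_query \<theta> q0 \<inter> r = {}))"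

end

theory Submission
  imports Defs
begin

text \<open>Take \<open>r = r\<^sub>1 \<union> (r\<^sub>2 - o\<^sub>1)\<close> for repairs \<open>r\<^sub>i\<close> witnessing that \<open>o\<^sub>i\<close> is garbage. Since \<open>o\<^sub>1\<close>
  is a union of blocks, no fact of \<open>o\<^sub>2 - o\<^sub>1\<close> is key-equal to one of \<open>o\<^sub>1\<close>, so \<open>r\<close> is a repair
  of \<open>o\<^sub>1 \<union> o\<^sub>2\<close>. If \<open>\<theta>(q)\<close> lies in \<open>(db - (o\<^sub>1 \<union> o\<^sub>2)) \<union> r\<close>, it lies in \<open>(db - o\<^sub>1) \<union> r\<^sub>1\<close>, so
  \<open>\<theta>(q\<^sub>0)\<close> misses \<open>r\<^sub>1\<close>. As every fact of \<open>o\<^sub>1\<close> has its atom in \<open>q\<^sub>0\<close> and \<open>q\<close> is self-join-free,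
  even \<open>\<theta>(q)\<close> misses \<open>r\<^sub>1\<close>; hence \<open>\<theta>(q)\<close> lies in \<open>(db - o\<^sub>2) \<union> r\<^sub>2\<close> and \<open>\<theta>(q\<^sub>0)\<close> misses \<open>r\<^sub>2\<close> too.\<close>

lemma key_equal_refl: "key_equal S A A"
  unfolding key_equal_def by simp

lemma key_equal_sym: "key_equal S A B \<Longrightarrow> key_equal S B A"
  unfolding key_equal_def by auto

lemma is_repair_iff_key_equal_cover:
  "is_repair S r s \<longleftrightarrow> r \<subseteq> s \<and> consistent S r \<and> (\<forall>A\<in>s. \<exists>B\<in>r. key_equal S A B)"
proof
  assume rep: "is_repair S r s"
  have "\<exists>B\<in>r. key_equal S A B" if "A \<in> s" for A
  proof (rule ccontr)
    assume none: "\<not> (\<exists>B\<in>r. key_equal S A B)"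
    then have "r \<subset> insert A r"
      using key_equal_refl by blast
    moreover have "consistent S (insert A r)"
      unfolding consistent_def
    proof (intro ballI impI)
      fix X Y
      assume "X \<in> insert A r" "Y \<in> insert A r" "key_equal S X Y"
      then show "X = Y"
        using rep none unfolding is_repair_def consistent_def by (auto dest: key_equal_sym)
    qed
    ultimately show False
      using rep \<open>A \<in> s\<close> unfolding is_repair_def by blast
  qed
  then show "r \<subseteq> s \<and> consistent S r \<and> (\<forall>A\<in>s. \<exists>B\<in>r. key_equal S A B)"
    using rep unfolding is_repair_def by blast
next
  assume cover: "r \<subseteq> s \<and> consistent S r \<and> (\<forall>A\<in>s. \<exists>B\<in>r. key_equal S A B)"
  have "\<not> consistent S r'" if "r \<subset> r'" "r' \<subseteq> s" for r'
  proof -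
    obtain A where "A \<in> r'" "A \<notin> r"
      using \<open>r \<subset> r'\<close> by blast
    moreover obtain B where "B \<in> r" "key_equal S A B"
      using cover \<open>A \<in> r'\<close> \<open>r' \<subseteq> s\<close> by blast
    ultimately show ?thesis
      using \<open>r \<subset> r'\<close> unfolding consistent_def by blast
  qed
  then show "is_repair S r s"
    using cover unfolding is_repair_def by blast
qed

lemma is_repair_Un:
  assumes "is_repair S r\<^sub>1 s\<^sub>1" and "is_repair S r\<^sub>2 s\<^sub>2"
    and separated: "\<And>A B. A \<in> s\<^sub>1 \<Longrightarrow> B \<in> s\<^sub>2 - s\<^sub>1 \<Longrightarrow> \<not> key_equal S A B"
  shows "is_repair S (r\<^sub>1 \<union> (r\<^sub>2 - s\<^sub>1)) (s\<^sub>1 \<union> s\<^sub>2)"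
proof -
  have r\<^sub>1: "r\<^sub>1 \<subseteq> s\<^sub>1" "consistent S r\<^sub>1" "\<forall>A\<in>s\<^sub>1. \<exists>B\<in>r\<^sub>1. key_equal S A B"
    and r\<^sub>2: "r\<^sub>2 \<subseteq> s\<^sub>2" "consistent S r\<^sub>2" "\<forall>A\<in>s\<^sub>2. \<exists>B\<in>r\<^sub>2. key_equal S A B"
    using assms(1,2) unfolding is_repair_iff_key_equal_cover by auto
  have "consistent S (r\<^sub>1 \<union> (r\<^sub>2 - s\<^sub>1))"
    unfolding consistent_def
  proof (intro ballI impI)
    fix A B
    assume "A \<in> r\<^sub>1 \<union> (r\<^sub>2 - s\<^sub>1)" "B \<in> r\<^sub>1 \<union> (r\<^sub>2 - s\<^sub>1)" "key_equal S A B"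
    then show "A = B"
      using r\<^sub>1 r\<^sub>2 separated key_equal_sym unfolding consistent_def by blast
  qed
  moreover have "\<exists>B\<in>r\<^sub>1 \<union> (r\<^sub>2 - s\<^sub>1). key_equal S A B" if "A \<in> s\<^sub>1 \<union> s\<^sub>2" for A
  proof (cases "A \<in> s\<^sub>1")
    case True
    then show ?thesis using r\<^sub>1 by blast
  next
    case False
    with that r\<^sub>2 obtain B where "B \<in> r\<^sub>2" "key_equal S A B"
      by blast
    moreover have "B \<notin> s\<^sub>1"
      using separated[of B A] False that calculation(2) key_equal_sym by blast
    ultimately show ?thesis by blast
  qed
  ultimately show ?thesis
    using r\<^sub>1 r\<^sub>2 unfolding is_repair_iff_key_equal_cover by blast
qed

lemma atom_of_val_atom:
  assumes "sjf_query S q" and "b \<in> q"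
  shows "atom_of q (val_atom \<theta> b) = b"
  unfolding atom_of_def
proof (rule the_equality)
  show "b \<in> q \<and> fst b = fst (val_atom \<theta> b)"
    using assms by (simp add: val_atom_def)
  show "a = b" if "a \<in> q \<and> fst a = fst (val_atom \<theta> b)" for a
    using assms that unfolding sjf_query_def val_atom_def by auto
qed

lemma val_query_Int_eq_empty_if_atoms_in_subquery:
  assumes "sjf_query S q" and "\<forall>A\<in>r. atom_of q A \<in> q\<^sub>0"
    and "val_query \<theta> q\<^sub>0 \<inter> r = {}"
  shows "val_query \<theta> q \<inter> r = {}"
  using assms atom_of_val_atom[OF assms(1)] unfolding val_query_def by fastforce

definition garbage_repair ::
  "'r schema \<Rightarrow> ('r, 'v, 'c) atom set \<Rightarrow> ('r, 'v, 'c) atom set \<Rightarrow> ('r, 'c) fact set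
     \<Rightarrow> ('r, 'c) fact set \<Rightarrow> ('r, 'c) fact set \<Rightarrow> bool" where
  "garbage_repair S q q\<^sub>0 db ob r \<longleftrightarrow> is_repair S r ob \<and>
     (\<forall>\<theta>::'v \<Rightarrow> 'c. val_query \<theta> q \<subseteq> (db - ob) \<union> r \<longrightarrow> val_query \<theta> q\<^sub>0 \<inter> r = {})"

lemma garbage_set_iff_garbage_repair:
  "garbage_set S q q\<^sub>0 db ob \<longleftrightarrow> ob \<subseteq> db \<and>
     (\<forall>A\<in>ob. atom_of q A \<in> q\<^sub>0 \<and> block S A db \<subseteq> ob) \<and> (\<exists>r. garbage_repair S q q\<^sub>0 db ob r)"
  unfolding garbage_set_def garbage_repair_def by blast

lemma garbage_repair_Un:
  fixes q q\<^sub>0 :: "('r, 'v, 'c) atom set"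
  assumes "sjf_query S q" and "o\<^sub>2 \<subseteq> db"
    and garbage\<^sub>1: "\<forall>A\<in>o\<^sub>1. atom_of q A \<in> q\<^sub>0 \<and> block S A db \<subseteq> o\<^sub>1"
    and r\<^sub>1: "garbage_repair S q q\<^sub>0 db o\<^sub>1 r\<^sub>1" and r\<^sub>2: "garbage_repair S q q\<^sub>0 db o\<^sub>2 r\<^sub>2"
  shows "garbage_repair S q q\<^sub>0 db (o\<^sub>1 \<union> o\<^sub>2) (r\<^sub>1 \<union> (r\<^sub>2 - o\<^sub>1))"
proof -
  have repairs: "is_repair S r\<^sub>1 o\<^sub>1" "is_repair S r\<^sub>2 o\<^sub>2"
    using r\<^sub>1 r\<^sub>2 unfolding garbage_repair_def by auto
  then have "r\<^sub>1 \<subseteq> o\<^sub>1" "r\<^sub>2 \<subseteq> o\<^sub>2"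
    unfolding is_repair_def by auto
  have "\<not> key_equal S A B" if "A \<in> o\<^sub>1" "B \<in> o\<^sub>2 - o\<^sub>1" for A B
    using garbage\<^sub>1 that \<open>o\<^sub>2 \<subseteq> db\<close> key_equal_sym unfolding block_def by blast
  then have "is_repair S (r\<^sub>1 \<union> (r\<^sub>2 - o\<^sub>1)) (o\<^sub>1 \<union> o\<^sub>2)"
    using is_repair_Un[OF repairs] by blast
  moreover have "val_query \<theta> q\<^sub>0 \<inter> (r\<^sub>1 \<union> (r\<^sub>2 - o\<^sub>1)) = {}"
    if \<theta>: "val_query \<theta> q \<subseteq> (db - (o\<^sub>1 \<union> o\<^sub>2)) \<union> (r\<^sub>1 \<union> (r\<^sub>2 - o\<^sub>1))" for \<theta> :: "'v \<Rightarrow> 'c"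
  proof -
    have "val_query \<theta> q\<^sub>0 \<inter> r\<^sub>1 = {}"
      using r\<^sub>1 \<theta> \<open>r\<^sub>2 \<subseteq> o\<^sub>2\<close> \<open>o\<^sub>2 \<subseteq> db\<close> unfolding garbage_repair_def by blast
    moreover from this have "val_query \<theta> q \<inter> r\<^sub>1 = {}"
      using val_query_Int_eq_empty_if_atoms_in_subquery[OF \<open>sjf_query S q\<close>] garbage\<^sub>1 \<open>r\<^sub>1 \<subseteq> o\<^sub>1\<close>
      by blast
    then have "val_query \<theta> q\<^sub>0 \<inter> r\<^sub>2 = {}"
      using r\<^sub>2 \<theta> unfolding garbage_repair_def by blast
    ultimately show ?thesis by blast
  qed
  ultimately show ?thesis
    unfolding garbage_repair_def by blast
qed

theorem lemma15:
  fixes S :: "'r schema"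
    and q q0 :: "('r, 'v, 'c) atom set"
    and db o1 o2 :: "('r, 'c) fact set"
  assumes "wf_schema S"
    and "sjf_query S q"
    and "q0 \<subseteq> q"
    and "is_database S q db"
    and "garbage_set S q q0 db o1"
    and "garbage_set S q q0 db o2"
  shows "garbage_set S q q0 db (o1 \<union> o2)"
proof -
  obtain r1 r2 where "garbage_repair S q q0 db o1 r1" "garbage_repair S q q0 db o2 r2"
    using assms(5,6) unfolding garbage_set_iff_garbage_repair by blast
  then have "garbage_repair S q q0 db (o1 \<union> o2) (r1 \<union> (r2 - o1))"
    using garbage_repair_Un assms(2,5,6) unfolding garbage_set_iff_garbage_repair by blast
  then show ?thesis
    using assms(5,6) unfolding garbage_set_iff_garbage_repair by blast
qed

end
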